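(* Let $\beta=\beta_n\ge0$ with $n\beta_n\to0$, let $(\delta_n)$ be a positive sequence with $\log(\delta_n)/\log n\to0$, and fix $0<\alpha<\infty$. Set $b_n=\sqrt{2\log n}-\frac{\log\log n+2\log\delta_n+\log(4\pi)}{2\sqrt{2\log n}}$. Then there exists a sequence $(c_n)$ with $c_n\to1$ such that for all $n$ large enough, $$\frac{Z_{n-1,\alpha b_n^2-\frac\beta4,\beta}}{Z_{n,\alpha,\beta}}\le c_n\sqrt{\frac{\alpha}{2\pi}}\;b_n^{-\beta\frac{(n-1)(n-2)}{2}-n+1}.$$
   Context: For $\alpha'>0$, $\beta\ge0$, $m\ge1$, $Z_{m,\alpha',\beta}=\int_{\mathbb{R}^m}\exp(-\frac{\alpha'}{2}\sum_{i=1}^m\lambda_i^2)\prod_{1\le i<j\le m}|\lambda_i-\lambda_j|^\beta\prod_{i=1}^m\mathrm{d}\lambda_i$. *)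

theory Defs
  imports "HOL-Analysis.Analysis"
begin

definition Z :: "nat \<Rightarrow> real \<Rightarrow> real \<Rightarrow> real" where
  "Z m a b = (\<integral>x. exp (-(a/2) * (\<Sum>i<m. (x i)^2)) *
       (\<Prod>i<m. \<Prod>j\<in>{i<..<m}. \<bar>x i - x j\<bar> powr b)
     \<partial>(PiM {..<m} (\<lambda>_. lborel)))"

end

theory Submission
  imports Defs "HOL-Probability.Distributions" "HOL-Real_Asymp.Real_Asymp"
begin

(* Rescaling x -> s x shows Z (n-1) (alpha s^2) beta = s^(-p) Z (n-1) alpha beta with
   p = beta (n-1)(n-2)/2 + n - 1, and the choice s^2 = b^2 - beta/(4 alpha) gives
   s^(-p) <= b^(-p) exp (beta p / (4 alpha)).  For the denominator, integrate out the last
   coordinate y of Z n alpha beta: since |u|^beta >= 1 + beta ln |u| and ln |u| is bounded below by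
   an integrable function of total mass -8, the y-integral of exp (-alpha y^2/2) prod_i |x_i - y|^beta
   is at least sqrt (2 pi/alpha) - 8 beta (n-1).  Both correction factors tend to 1 because
   n beta_n -> 0, and b_n -> infinity makes the pointwise estimates applicable. *)

definition log_kernel :: "real \<Rightarrow> real" where
  "log_kernel u = indicator {-1..1} u * (2 * \<bar>u\<bar> powr (-1/2))"

lemma log_kernel_nonneg: "0 \<le> log_kernel u"
  unfolding log_kernel_def by (simp add: indicator_def)

lemma log_kernel_measurable [measurable]: "log_kernel \<in> borel_measurable borel"
  unfolding log_kernel_def by measurable

lemma ln_abs_ge_neg_log_kernel:
  assumes "u \<noteq> 0"
  shows "- log_kernel u \<le> ln \<bar>u\<bar>"
proof (cases "\<bar>u\<bar> \<ge> 1")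
  case True
  then show ?thesis using log_kernel_nonneg[of u] by (smt (verit) ln_ge_zero)
next
  case False
  define v where "v = \<bar>u\<bar> powr (-1/2)"
  have "0 < v" using assms by (simp add: v_def)
  have "ln \<bar>u\<bar> = -2 * ln v" using assms by (simp add: v_def ln_powr)
  moreover have "ln v \<le> v - 1" using \<open>0 < v\<close> by (rule ln_le_minus_one)
  moreover have "log_kernel u = 2 * v" using False by (auto simp: log_kernel_def v_def indicator_def)
  ultimately show ?thesis by simp
qed

lemma has_integral_log_kernel: "(log_kernel has_integral 8) UNIV"
proof -
  let ?f = "\<lambda>x::real. 2 * \<bar>x\<bar> powr (-1/2)"
  have "((\<lambda>x. x powr (-1/2)) has_integral (1 powr (-1/2+1) / (-1/2+1))) {0..1::real}"
    by (rule has_integral_powr_from_0) auto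
  then have "((\<lambda>x. 2 * x powr (-1/2)) has_integral (2 * 2)) {0..1::real}"
    by (intro has_integral_mult_right) simp
  then have right: "(?f has_integral 4) {0..1}"
    by (subst has_integral_cong[where g="\<lambda>x. 2 * x powr (-1/2)"]) auto
  have "((\<lambda>x. ?f (-x)) has_integral 4) {-1..-0}"
    using right by (subst has_integral_reflect_real) simp
  then have left: "(?f has_integral 4) {-1..0}" by simp
  have "(?f has_integral (4 + 4)) {-1..1}"
    by (rule has_integral_combine[OF _ _ left right]) auto
  then have "((\<lambda>x. if x \<in> {-1..1} then ?f x else 0) has_integral 8) UNIV"
    by (subst has_integral_restrict_UNIV) simp
  moreover have "log_kernel = (\<lambda>x. if x \<in> {-1..1} then ?f x else 0)"
    by (auto simp: log_kernel_def fun_eq_iff)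
  ultimately show ?thesis by simp
qed

lemma nn_integral_log_kernel: "(\<integral>\<^sup>+y. ennreal (log_kernel (c - y)) \<partial>lborel) = 8"
proof -
  have "(\<integral>\<^sup>+u. ennreal (log_kernel u) \<partial>lborel) = 8"
    using nn_integral_has_integral_lborel[OF _ log_kernel_nonneg has_integral_log_kernel] by simp
  moreover have "(\<integral>\<^sup>+u. ennreal (log_kernel u) \<partial>lborel)
      = ennreal \<bar>-1\<bar> * (\<integral>\<^sup>+y. ennreal (log_kernel (c + (-1) * y)) \<partial>lborel)"
    by (rule nn_integral_real_affine) auto
  ultimately show ?thesis by simp
qed

lemma nn_integral_gaussian:
  assumes "0 < a"
  shows "(\<integral>\<^sup>+y. ennreal (exp (-(a/2) * y^2)) \<partial>lborel) = ennreal (sqrt (2*pi/a))"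
proof -
  define \<sigma> where "\<sigma> = 1 / sqrt a"
  have "0 < \<sigma>" using assms by (simp add: \<sigma>_def)
  have density: "exp (-(a/2) * y^2) = sqrt (2*pi/a) * normal_density 0 \<sigma> y" for y
    using assms by (simp add: normal_density_def \<sigma>_def power_divide real_sqrt_divide field_simps)
  have "(\<integral>\<^sup>+y. ennreal (normal_density 0 \<sigma> y) \<partial>lborel) = 1"
    using \<open>0 < \<sigma>\<close> by (subst nn_integral_eq_integral)
      (auto intro: integrable_normal_density integral_normal_density)
  moreover have "(\<integral>\<^sup>+y. ennreal (exp (-(a/2) * y^2)) \<partial>lborel)
      = (\<integral>\<^sup>+y. ennreal (sqrt (2*pi/a)) * ennreal (normal_density 0 \<sigma> y) \<partial>lborel)"
    using assms by (intro nn_integral_cong) (simp only: density, simp add: ennreal_mult)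
  ultimately show ?thesis by (simp add: nn_integral_cmult)
qed

lemma prod_abs_powr_ge:
  fixes x :: "'i \<Rightarrow> real"
  assumes "finite I" and "0 \<le> \<beta>" and "\<forall>i\<in>I. x i \<noteq> y"
  shows "1 - \<beta> * (\<Sum>i\<in>I. log_kernel (x i - y)) \<le> (\<Prod>i\<in>I. \<bar>x i - y\<bar> powr \<beta>)"
proof -
  have "(\<Sum>i\<in>I. \<beta> * - log_kernel (x i - y)) \<le> (\<Sum>i\<in>I. \<beta> * ln \<bar>x i - y\<bar>)"
    using assms by (intro sum_mono mult_left_mono ln_abs_ge_neg_log_kernel) auto
  then have "1 - \<beta> * (\<Sum>i\<in>I. log_kernel (x i - y)) \<le> 1 + (\<Sum>i\<in>I. \<beta> * ln \<bar>x i - y\<bar>)"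
    by (simp add: sum_distrib_left sum_negf)
  also have "\<dots> \<le> exp (\<Sum>i\<in>I. \<beta> * ln \<bar>x i - y\<bar>)" by (rule exp_ge_add_one_self)
  also have "\<dots> = (\<Prod>i\<in>I. \<bar>x i - y\<bar> powr \<beta>)"
    using assms by (simp add: exp_sum powr_def mult.commute)
  finally show ?thesis .
qed

lemma nn_integral_gaussian_prod_abs_powr_ge:
  fixes x :: "nat \<Rightarrow> real"
  assumes "0 < a" and "0 \<le> \<beta>"
  shows "ennreal (sqrt (2*pi/a) - 8 * \<beta> * real m)
    \<le> (\<integral>\<^sup>+y. ennreal (exp (-(a/2) * y^2) * (\<Prod>i<m. \<bar>x i - y\<bar> powr \<beta>)) \<partial>lborel)"
proof -
  let ?g = "\<lambda>y. exp (-(a/2) * y^2)" and ?V = "\<lambda>y. \<Prod>i<m. \<bar>x i - y\<bar> powr \<beta>"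
  let ?L = "\<lambda>y. \<Sum>i<m. log_kernel (x i - y)"
  have pointwise: "?g y \<le> ?g y * ?V y + \<beta> * ?L y" if "\<forall>i\<in>{..<m}. y \<noteq> x i" for y
  proof -
    have "?g y * (1 - \<beta> * ?L y) \<le> ?g y * ?V y"
      using that assms by (intro mult_left_mono prod_abs_powr_ge) auto
    moreover have "?g y * (\<beta> * ?L y) \<le> \<beta> * ?L y"
      using assms by (intro mult_left_le_one_le) (auto simp: sum_nonneg log_kernel_nonneg)
    ultimately show ?thesis by (simp add: algebra_simps)
  qed
  have avoids_x: "AE y in lborel. \<forall>i\<in>{..<m}. y \<noteq> x i"
    by (rule eventually_ball_finite) (auto intro: AE_lborel_singleton)
  have "(\<integral>\<^sup>+y. ennreal (?g y) \<partial>lborel)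
      \<le> (\<integral>\<^sup>+y. ennreal (?g y * ?V y) + ennreal \<beta> * (\<Sum>i<m. ennreal (log_kernel (x i - y))) \<partial>lborel)"
    using avoids_x
  proof (rule nn_integral_mono_AE[OF AE_mp, OF _ AE_I2], intro impI)
    fix y assume "\<forall>i\<in>{..<m}. y \<noteq> x i"
    then have "ennreal (?g y) \<le> ennreal (?g y * ?V y + \<beta> * ?L y)"
      by (intro ennreal_leI pointwise)
    also have "\<dots> = ennreal (?g y * ?V y) + ennreal \<beta> * (\<Sum>i<m. ennreal (log_kernel (x i - y)))"
      using assms by (simp add: ennreal_plus ennreal_mult sum_nonneg log_kernel_nonneg prod_nonneg
          flip: sum_ennreal)
    finally show "ennreal (?g y) \<le> ennreal (?g y * ?V y) + ennreal \<beta> * (\<Sum>i<m. ennreal (log_kernel (x i - y)))" .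
  qed
  also have "\<dots> = (\<integral>\<^sup>+y. ennreal (?g y * ?V y) \<partial>lborel)
      + ennreal \<beta> * (\<Sum>i<m. \<integral>\<^sup>+y. ennreal (log_kernel (x i - y)) \<partial>lborel)"
    by (subst nn_integral_add) (auto simp: nn_integral_cmult nn_integral_sum)
  also have "\<dots> = (\<integral>\<^sup>+y. ennreal (?g y * ?V y) \<partial>lborel) + ennreal (8 * \<beta> * real m)"
    using assms by (simp add: nn_integral_log_kernel ennreal_mult ennreal_of_nat_eq_real_of_nat mult_ac)
  finally have "ennreal (sqrt (2*pi/a))
      \<le> (\<integral>\<^sup>+y. ennreal (?g y * ?V y) \<partial>lborel) + ennreal (8 * \<beta> * real m)"
    using nn_integral_gaussian[OF \<open>0 < a\<close>] by simp
  then show ?thesis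
    using assms by (simp flip: ennreal_minus add: ennreal_minus_le_iff add.commute)
qed

definition Z_integrand :: "nat \<Rightarrow> real \<Rightarrow> real \<Rightarrow> (nat \<Rightarrow> real) \<Rightarrow> real" where
  "Z_integrand m a b x = exp (-(a/2) * (\<Sum>i<m. (x i)^2)) *
     (\<Prod>i<m. \<Prod>j\<in>{i<..<m}. \<bar>x i - x j\<bar> powr b)"

(* Z is a Bochner integral and hence 0 for non-integrable integrands; the nonnegative integral
   Z_nn spares us proving that Z is finite. *)
definition Z_nn :: "nat \<Rightarrow> real \<Rightarrow> real \<Rightarrow> ennreal" where
  "Z_nn m a b = (\<integral>\<^sup>+x. ennreal (Z_integrand m a b x) \<partial>PiM {..<m} (\<lambda>_. lborel))"

lemma Z_integrand_nonneg: "0 \<le> Z_integrand m a b x"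
  unfolding Z_integrand_def by (intro mult_nonneg_nonneg prod_nonneg) auto

lemma Z_integrand_measurable [measurable]:
  "Z_integrand m a b \<in> borel_measurable (PiM {..<m} (\<lambda>_. lborel))"
  unfolding Z_integrand_def by measurable

lemma Z_eq_enn2real_Z_nn: "Z m a b = enn2real (Z_nn m a b)"
  unfolding Z_def Z_nn_def Z_integrand_def[symmetric]
  by (rule integral_eq_nn_integral) (auto simp: Z_integrand_nonneg)

lemma Z_integrand_fun_upd:
  "Z_integrand (Suc m) a b (x(m := y))
     = Z_integrand m a b x * (exp (-(a/2) * y^2) * (\<Prod>i<m. \<bar>x i - y\<bar> powr b))"
proof -
  have "(\<Prod>j\<in>{i<..<Suc m}. \<bar>(x(m := y)) i - (x(m := y)) j\<bar> powr b)
      = (\<Prod>j\<in>{i<..<m}. \<bar>x i - x j\<bar> powr b) * \<bar>x i - y\<bar> powr b" if "i < m" for i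
  proof -
    have "{i<..<Suc m} = insert m {i<..<m}" using that by auto
    then show ?thesis using that by (auto simp: mult.commute intro!: prod.cong)
  qed
  then have "(\<Prod>i<Suc m. \<Prod>j\<in>{i<..<Suc m}. \<bar>(x(m := y)) i - (x(m := y)) j\<bar> powr b)
      = (\<Prod>i<m. (\<Prod>j\<in>{i<..<m}. \<bar>x i - x j\<bar> powr b) * \<bar>x i - y\<bar> powr b)"
    by (simp add: prod.lessThan_Suc)
  then show ?thesis
    by (simp add: Z_integrand_def sum.lessThan_Suc prod.distrib algebra_simps flip: exp_add)
qed

lemma Z_nn_Suc_ge:
  assumes "0 < a" and "0 \<le> b"
  shows "ennreal (sqrt (2*pi/a) - 8 * b * real m) * Z_nn m a b \<le> Z_nn (Suc m) a b"
proof -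
  interpret product_sigma_finite "\<lambda>_. lborel" by standard
  have insert_m: "{..<Suc m} = insert m {..<m}" by auto
  have "Z_nn m a b * ennreal (sqrt (2*pi/a) - 8 * b * real m)
      = (\<integral>\<^sup>+x. ennreal (Z_integrand m a b x) * ennreal (sqrt (2*pi/a) - 8 * b * real m)
          \<partial>PiM {..<m} (\<lambda>_. lborel))"
    unfolding Z_nn_def by (rule nn_integral_multc[symmetric]) measurable
  also have "\<dots> \<le> (\<integral>\<^sup>+x. ennreal (Z_integrand m a b x) *
      (\<integral>\<^sup>+y. ennreal (exp (-(a/2) * y^2) * (\<Prod>i<m. \<bar>x i - y\<bar> powr b)) \<partial>lborel)
        \<partial>PiM {..<m} (\<lambda>_. lborel))"
    using assms by (intro nn_integral_mono mult_left_mono nn_integral_gaussian_prod_abs_powr_ge) auto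
  also have "\<dots> = (\<integral>\<^sup>+x. (\<integral>\<^sup>+y. ennreal (Z_integrand (Suc m) a b (x(m := y))) \<partial>lborel)
      \<partial>PiM {..<m} (\<lambda>_. lborel))"
    by (intro nn_integral_cong, subst nn_integral_cmult[symmetric])
      (auto simp: Z_integrand_fun_upd ennreal_mult Z_integrand_nonneg prod_nonneg)
  also have "\<dots> = Z_nn (Suc m) a b"
    unfolding Z_nn_def insert_m
    by (rule product_nn_integral_insert[symmetric]) (auto simp flip: insert_m)
  finally show ?thesis by (simp only: mult.commute)
qed

lemma nn_integral_PiM_lborel_scale:
  fixes F :: "('i \<Rightarrow> real) \<Rightarrow> ennreal" and c :: real
  assumes "finite I" and "0 < c" and "F \<in> borel_measurable (PiM I (\<lambda>_. lborel))"
  shows "(\<integral>\<^sup>+x. F (\<lambda>i\<in>I. c * x i) \<partial>PiM I (\<lambda>_. lborel))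
    = ennreal ((1/c) ^ card I) * (\<integral>\<^sup>+x. F x \<partial>PiM I (\<lambda>_. lborel))"
  using assms(1,3)
proof (induction I arbitrary: F rule: finite_induct)
  case empty
  then show ?case by (simp add: PiM_empty nn_integral_count_space_finite)
next
  case (insert k I)
  interpret product_sigma_finite "\<lambda>_. lborel" by standard
  note F_measurable [measurable] = insert.prems
  define H where "H z = (\<integral>\<^sup>+y. F (z(k := y)) \<partial>lborel)" for z
  have H_measurable [measurable]: "H \<in> borel_measurable (PiM I (\<lambda>_. lborel))"
    unfolding H_def by measurable
  have inner: "(\<integral>\<^sup>+y. F (z(k := c * y)) \<partial>lborel) = ennreal (1/c) * H z"
    if "z \<in> space (PiM I (\<lambda>_. lborel))" for z
  proof -
    have z_measurable: "(\<lambda>y. F (z(k := y))) \<in> borel_measurable borel"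
      using measurable_compose[OF measurable_component_update[OF that insert.hyps(2)] F_measurable]
      by (simp add: fun_upd_def)
    have "H z = ennreal c * (\<integral>\<^sup>+y. F (z(k := c * y)) \<partial>lborel)"
      unfolding H_def using nn_integral_real_affine[OF z_measurable, of c 0] \<open>0 < c\<close> by simp
    moreover have "ennreal (1/c) * ennreal c = 1"
      using \<open>0 < c\<close> by (simp flip: ennreal_mult)
    ultimately show ?thesis by (simp add: mult.assoc[symmetric])
  qed
  have "(\<integral>\<^sup>+x. F (\<lambda>i\<in>insert k I. c * x i) \<partial>PiM (insert k I) (\<lambda>_. lborel))
      = (\<integral>\<^sup>+x. (\<integral>\<^sup>+y. F ((\<lambda>i\<in>I. c * x i)(k := c * y)) \<partial>lborel) \<partial>PiM I (\<lambda>_. lborel))"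
    using insert.hyps
    by (subst product_nn_integral_insert) (auto intro!: nn_integral_cong arg_cong[where f=F])
  also have "\<dots> = (\<integral>\<^sup>+x. ennreal (1/c) * H (\<lambda>i\<in>I. c * x i) \<partial>PiM I (\<lambda>_. lborel))"
    by (intro nn_integral_cong inner) (simp add: space_PiM)
  also have "\<dots> = ennreal (1/c) * (\<integral>\<^sup>+x. H (\<lambda>i\<in>I. c * x i) \<partial>PiM I (\<lambda>_. lborel))"
    by (rule nn_integral_cmult) measurable
  also have "\<dots> = ennreal (1/c) * (ennreal ((1/c) ^ card I) * (\<integral>\<^sup>+x. H x \<partial>PiM I (\<lambda>_. lborel)))"
    by (simp add: insert.IH)
  also have "(\<integral>\<^sup>+x. H x \<partial>PiM I (\<lambda>_. lborel)) = (\<integral>\<^sup>+x. F x \<partial>PiM (insert k I) (\<lambda>_. lborel))"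
    unfolding H_def using insert.hyps by (rule product_nn_integral_insert[symmetric]) measurable
  finally show ?case
    using insert.hyps \<open>0 < c\<close> by (simp add: ennreal_mult[symmetric] mult.assoc[symmetric])
qed

lemma sum_card_greaterThanLessThan: "(\<Sum>i<m. real (card {i<..<m})) = real m * (real m - 1) / 2"
proof -
  have "(\<Sum>i<m. real (card {i<..<m})) = (\<Sum>i<m. real (m - Suc i))" by simp
  also have "\<dots> = (\<Sum>i<m. real i)" by (rule sum.nat_diff_reindex)
  also have "\<dots> = real m * (real m - 1) / 2" by (induction m) (auto simp: field_simps)
  finally show ?thesis .
qed

lemma Z_integrand_scale:
  assumes "0 < s"
  shows "Z_integrand m a b (\<lambda>i\<in>{..<m}. s * x i)
    = s powr (b * (real m * (real m - 1) / 2)) * Z_integrand m (a * s^2) b x"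
proof -
  have "(\<Prod>i<m. \<Prod>j\<in>{i<..<m}. \<bar>s * x i - s * x j\<bar> powr b)
      = (\<Prod>i<m. \<Prod>j\<in>{i<..<m}. s powr b * \<bar>x i - x j\<bar> powr b)"
    using assms by (intro prod.cong refl) (simp add: abs_mult powr_mult flip: right_diff_distrib)
  also have "\<dots> = (\<Prod>i<m. (s powr b) ^ card {i<..<m}) * (\<Prod>i<m. \<Prod>j\<in>{i<..<m}. \<bar>x i - x j\<bar> powr b)"
    by (simp add: prod.distrib)
  also have "(\<Prod>i<m. (s powr b) ^ card {i<..<m}) = s powr (\<Sum>i<m. b * real (card {i<..<m}))"
    using assms by (simp add: powr_realpow[symmetric] powr_powr powr_sum del: card_greaterThanLessThan)
  also have "\<dots> = s powr (b * (real m * (real m - 1) / 2))"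
    by (simp only: sum_card_greaterThanLessThan flip: sum_distrib_left)
  finally have vandermonde: "(\<Prod>i<m. \<Prod>j\<in>{i<..<m}. \<bar>s * x i - s * x j\<bar> powr b)
      = s powr (b * (real m * (real m - 1) / 2)) * (\<Prod>i<m. \<Prod>j\<in>{i<..<m}. \<bar>x i - x j\<bar> powr b)" .
  have "(\<Sum>i<m. (s * x i)^2) = s^2 * (\<Sum>i<m. (x i)^2)"
    by (simp add: power_mult_distrib sum_distrib_left)
  then show ?thesis
    by (simp add: Z_integrand_def vandermonde mult_ac)
qed

lemma Z_nn_scale:
  assumes "0 < s"
  shows "Z_nn m (a * s^2) b = ennreal (s powr (- (b * (real m * (real m - 1) / 2)) - real m)) * Z_nn m a b"
proof -
  define e where "e = b * (real m * (real m - 1) / 2)"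
  have "ennreal (s powr e) * Z_nn m (a * s^2) b
      = (\<integral>\<^sup>+x. ennreal (s powr e * Z_integrand m (a * s^2) b x) \<partial>PiM {..<m} (\<lambda>_. lborel))"
    unfolding Z_nn_def
    by (subst nn_integral_cmult[symmetric]) (auto simp: ennreal_mult Z_integrand_nonneg)
  also have "\<dots> = (\<integral>\<^sup>+x. ennreal (Z_integrand m a b (\<lambda>i\<in>{..<m}. s * x i)) \<partial>PiM {..<m} (\<lambda>_. lborel))"
    using assms by (simp add: Z_integrand_scale e_def)
  also have "\<dots> = ennreal ((1/s) ^ m) * Z_nn m a b"
    unfolding Z_nn_def using assms by (subst nn_integral_PiM_lborel_scale) auto
  finally have scaled: "ennreal (s powr e) * Z_nn m (a * s^2) b = ennreal ((1/s) ^ m) * Z_nn m a b" .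
  have "Z_nn m (a * s^2) b = ennreal (s powr (- e)) * (ennreal (s powr e) * Z_nn m (a * s^2) b)"
    using assms by (simp add: mult.assoc[symmetric] powr_minus flip: ennreal_mult)
  also have "\<dots> = ennreal (s powr (- e - real m)) * Z_nn m a b"
    using assms by (simp add: scaled mult.assoc[symmetric] powr_diff powr_realpow power_one_over
        divide_inverse power_inverse flip: ennreal_mult)
  finally show ?thesis by (simp add: e_def)
qed

lemma powr_one_minus_neg_le_exp:
  fixes \<epsilon> E :: real
  assumes "0 \<le> \<epsilon>" and "\<epsilon> \<le> 1/2" and "0 \<le> E"
  shows "(1 - \<epsilon>) powr (- E) \<le> exp (2 * \<epsilon> * E)"
proof -
  have "- ln (1 - \<epsilon>) \<le> \<epsilon> + 2 * \<epsilon>^2"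
    using ln_one_minus_pos_lower_bound[OF assms(1,2)] by linarith
  also have "\<dots> \<le> 2 * \<epsilon>"
    using mult_left_mono[of \<epsilon> "1/2" \<epsilon>] assms by (simp add: power2_eq_square)
  finally have "- ln (1 - \<epsilon>) * E \<le> 2 * \<epsilon> * E"
    using \<open>0 \<le> E\<close> by (rule mult_right_mono)
  then show ?thesis
    using assms by (simp add: powr_def algebra_simps)
qed

lemma enn2real_divide_le:
  fixes A B :: ennreal and K :: real
  assumes "ennreal K * A \<le> B" and "0 < K"
  shows "enn2real A / enn2real B \<le> 1 / K"
proof (cases "enn2real B = 0")
  case False
  then have "B < top" by (metis enn2real_top top.not_eq_extremum)
  then have "K * enn2real A \<le> enn2real B"
    using assms enn2real_mono[OF assms(1)] by (simp add: enn2real_mult)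
  moreover have "0 < enn2real B"
    using False enn2real_nonneg[of B] by linarith
  ultimately show ?thesis
    using assms(2) by (simp add: divide_simps mult.commute)
qed (use assms in auto)

(* Z (n - 1) (a * s^2) b = s powr (- scaling_exponent n b) * Z (n - 1) a b, see Z_nn_scale. *)
definition scaling_exponent :: "nat \<Rightarrow> real \<Rightarrow> real" where
  "scaling_exponent n b = b * ((real n - 1) * (real n - 2) / 2) + real n - 1"

definition correction_factor :: "real \<Rightarrow> real \<Rightarrow> nat \<Rightarrow> real" where
  "correction_factor \<alpha> \<beta> n = exp (\<beta> * scaling_exponent n \<beta> / (4 * \<alpha>))
     / ((sqrt (2*pi/\<alpha>) - 8 * \<beta> * (real n - 1)) * sqrt (\<alpha> / (2*pi)))"

lemma Z_ratio_le:
  fixes n :: nat and \<alpha> \<beta> b :: real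
  assumes "1 \<le> n" and "0 < \<alpha>" and "0 \<le> \<beta>" and "\<beta> \<le> 2 * \<alpha>" and "1 \<le> b"
    and "8 * \<beta> * (real n - 1) < sqrt (2*pi/\<alpha>)"
  shows "Z (n - 1) (\<alpha> * b^2 - \<beta>/4) \<beta> / Z n \<alpha> \<beta>
    \<le> correction_factor \<alpha> \<beta> n * sqrt (\<alpha> / (2*pi)) * b powr (- scaling_exponent n \<beta>)"
proof -
  define p where "p = scaling_exponent n \<beta>"
  obtain m where n: "n = Suc m" using assms(1) by (cases n) auto
  define K where "K = sqrt (2*pi/\<alpha>) - 8 * \<beta> * (real n - 1)"
  define \<epsilon> where "\<epsilon> = \<beta> / (4 * \<alpha> * b^2)"
  define s where "s = b * sqrt (1 - \<epsilon>)"
  have "0 < K" using assms(6) by (simp add: K_def)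
  have "0 \<le> (real n - 1) * (real n - 2)"
  proof (cases "n = 1")
    case False
    then have "2 \<le> real n" using assms(1) by simp
    then show ?thesis by (intro mult_nonneg_nonneg) auto
  qed simp
  then have "0 \<le> \<beta> * ((real n - 1) * (real n - 2) / 2)"
    using assms(3) by simp
  moreover have "1 \<le> real n" using assms(1) by simp
  ultimately have "0 \<le> p" unfolding p_def scaling_exponent_def by linarith
  have "\<epsilon> \<le> \<beta> / (4 * \<alpha>)"
    unfolding \<epsilon>_def using assms by (intro divide_left_mono) (auto simp: one_le_power)
  moreover have "\<beta> / (4 * \<alpha>) \<le> 1/2" using assms by (simp add: field_simps)
  ultimately have \<epsilon>_le: "\<epsilon> * p \<le> \<beta> * p / (4 * \<alpha>)" and "\<epsilon> \<le> 1/2"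
    using \<open>0 \<le> p\<close> by (auto dest: mult_right_mono)
  have "0 \<le> \<epsilon>" using assms by (simp add: \<epsilon>_def)
  have "0 < s" using \<open>\<epsilon> \<le> 1/2\<close> assms by (simp add: s_def)
  have "s^2 = b^2 * (1 - \<epsilon>)"
    using \<open>\<epsilon> \<le> 1/2\<close> by (simp add: s_def power_mult_distrib)
  moreover have "b^2 * \<epsilon> = \<beta> / (4 * \<alpha>)"
    using assms(5) by (simp add: \<epsilon>_def)
  ultimately have s_squared: "\<alpha> * s^2 = \<alpha> * b^2 - \<beta>/4"
    using assms(2) by (simp add: right_diff_distrib)
  have exponent: "- (\<beta> * (real m * (real m - 1) / 2)) - real m = - p"
    by (simp add: p_def scaling_exponent_def n algebra_simps)
  have numerator: "Z_nn m (\<alpha> * b^2 - \<beta>/4) \<beta> = ennreal (s powr (- p)) * Z_nn m \<alpha> \<beta>"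
    using Z_nn_scale[OF \<open>0 < s\<close>, of m \<alpha> \<beta>] unfolding s_squared exponent .
  have denominator: "ennreal K * Z_nn m \<alpha> \<beta> \<le> Z_nn n \<alpha> \<beta>"
    using Z_nn_Suc_ge[of \<alpha> \<beta> m] assms(2,3) by (simp add: K_def n)
  have "s powr (- p) = b powr (- p) * (1 - \<epsilon>) powr (- (p / 2))"
    using assms(5) \<open>\<epsilon> \<le> 1/2\<close> by (simp add: s_def powr_mult powr_half_sqrt[symmetric] powr_powr)
  also have "\<dots> \<le> b powr (- p) * exp (\<beta> * p / (4 * \<alpha>))"
  proof (rule mult_left_mono)
    have "(1 - \<epsilon>) powr (- (p / 2)) \<le> exp (2 * \<epsilon> * (p / 2))"
      using \<open>0 \<le> \<epsilon>\<close> \<open>\<epsilon> \<le> 1/2\<close> \<open>0 \<le> p\<close> by (intro powr_one_minus_neg_le_exp) auto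
    also have "\<dots> \<le> exp (\<beta> * p / (4 * \<alpha>))"
      using \<epsilon>_le by simp
    finally show "(1 - \<epsilon>) powr (- (p / 2)) \<le> exp (\<beta> * p / (4 * \<alpha>))" .
  qed simp
  finally have s_bound: "s powr (- p) \<le> b powr (- p) * exp (\<beta> * p / (4 * \<alpha>))" .
  have "Z (n - 1) (\<alpha> * b^2 - \<beta>/4) \<beta> / Z n \<alpha> \<beta>
      = s powr (- p) * (enn2real (Z_nn m \<alpha> \<beta>) / enn2real (Z_nn n \<alpha> \<beta>))"
    by (simp add: Z_eq_enn2real_Z_nn numerator n enn2real_mult)
  also have "\<dots> \<le> s powr (- p) * (1 / K)"
    using enn2real_divide_le[OF denominator \<open>0 < K\<close>] by (rule mult_left_mono) simp
  also have "\<dots> \<le> b powr (- p) * exp (\<beta> * p / (4 * \<alpha>)) * (1 / K)"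
    using s_bound \<open>0 < K\<close> by (intro mult_right_mono) auto
  also have "\<dots> = correction_factor \<alpha> \<beta> n * sqrt (\<alpha> / (2*pi)) * b powr (- scaling_exponent n \<beta>)"
    using assms(2) by (simp add: correction_factor_def K_def p_def)
  finally show ?thesis .
qed

lemma real_mult_tendsto_zero_imp_tendsto_zero:
  fixes f :: "nat \<Rightarrow> real"
  assumes "(\<lambda>n. real n * f n) \<longlonglongrightarrow> 0"
  shows "f \<longlonglongrightarrow> 0"
proof -
  have "(\<lambda>n. real n * f n * inverse (real n)) \<longlonglongrightarrow> 0 * 0"
    by (intro tendsto_mult assms lim_inverse_n)
  moreover have "\<forall>\<^sub>F n in sequentially. real n * f n * inverse (real n) = f n"
    using eventually_gt_at_top[of 0] by eventually_elim simp
  ultimately show ?thesis by (simp add: Lim_transform_eventually)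
qed

lemma filterlim_gumbel_centering_at_top:
  fixes \<delta> :: "nat \<Rightarrow> real"
  assumes "(\<lambda>n. ln (\<delta> n) / ln (real n)) \<longlonglongrightarrow> 0"
  shows "filterlim (\<lambda>n. sqrt (2 * ln (real n))
    - (ln (ln (real n)) + 2 * ln (\<delta> n) + ln (4 * pi)) / (2 * sqrt (2 * ln (real n)))) at_top sequentially"
proof -
  let ?L = "\<lambda>n. ln (real n)"
  have "filterlim ?L at_top sequentially" by real_asymp
  then have "(\<lambda>n. ln (4 * pi) / ?L n) \<longlonglongrightarrow> 0"
    by (intro tendsto_divide_0[OF tendsto_const] filterlim_at_top_imp_at_infinity)
  moreover have "(\<lambda>n. ln (?L n) / ?L n) \<longlonglongrightarrow> 0" by real_asymp
  ultimately have "(\<lambda>n. 1 - (ln (?L n) / ?L n + 2 * (ln (\<delta> n) / ?L n) + ln (4 * pi) / ?L n) / 4)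
      \<longlonglongrightarrow> 1 - (0 + 2 * 0 + 0) / 4"
    using assms by (intro tendsto_intros) auto
  then have lim: "filterlim (\<lambda>n. (1 - (ln (?L n) / ?L n + 2 * (ln (\<delta> n) / ?L n) + ln (4 * pi) / ?L n) / 4)
      * sqrt (2 * ?L n)) at_top sequentially"
    by (rule filterlim_tendsto_pos_mult_at_top) (simp, real_asymp)
  have "\<forall>\<^sub>F n in sequentially.
      (1 - (ln (?L n) / ?L n + 2 * (ln (\<delta> n) / ?L n) + ln (4 * pi) / ?L n) / 4) * sqrt (2 * ?L n)
      = sqrt (2 * ?L n) - (ln (?L n) + 2 * ln (\<delta> n) + ln (4 * pi)) / (2 * sqrt (2 * ?L n))"
    using eventually_gt_at_top[of 1]
  proof eventually_elim
    case (elim n)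
    then have "0 < ?L n" by simp
    then have "sqrt (2 * ?L n) * sqrt (2 * ?L n) = 2 * ?L n" by simp
    with \<open>0 < ?L n\<close> show ?case by (simp add: field_simps)
  qed
  then show ?thesis
    using lim by (simp add: filterlim_cong[OF refl refl])
qed

lemma tendsto_mult_scaling_exponent:
  assumes "(\<lambda>n. real n * \<beta> n) \<longlonglongrightarrow> 0"
  shows "(\<lambda>n. \<beta> n * scaling_exponent n (\<beta> n)) \<longlonglongrightarrow> 0"
proof -
  define u where "u n = real n * \<beta> n" for n
  have "\<beta> n * scaling_exponent n (\<beta> n) = (u n)^2 / 2 - 3/2 * \<beta> n * u n + (\<beta> n)^2 + u n - \<beta> n" for n
    by (simp add: scaling_exponent_def u_def field_simps power2_eq_square)
  moreover have "(\<lambda>n. (u n)^2 / 2 - 3/2 * \<beta> n * u n + (\<beta> n)^2 + u n - \<beta> n) \<longlonglongrightarrow> 0"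
    using assms real_mult_tendsto_zero_imp_tendsto_zero[OF assms] unfolding u_def[symmetric]
    by (auto intro!: tendsto_eq_intros)
  ultimately show ?thesis by simp
qed

lemma tendsto_zero_mult_pred:
  fixes f :: "nat \<Rightarrow> real"
  assumes "(\<lambda>n. real n * f n) \<longlonglongrightarrow> 0"
  shows "(\<lambda>n. c * f n * (real n - 1)) \<longlonglongrightarrow> 0"
proof -
  have "(\<lambda>n. c * (real n * f n) - c * f n) \<longlonglongrightarrow> c * 0 - c * 0"
    by (intro tendsto_diff tendsto_mult_left assms real_mult_tendsto_zero_imp_tendsto_zero)
  then show ?thesis by (simp add: algebra_simps)
qed

lemma tendsto_correction_factor:
  assumes "0 < \<alpha>" and "(\<lambda>n. real n * \<beta> n) \<longlonglongrightarrow> 0"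
  shows "(\<lambda>n. correction_factor \<alpha> (\<beta> n) n) \<longlonglongrightarrow> 1"
proof -
  have "(\<lambda>n. exp (\<beta> n * scaling_exponent n (\<beta> n) / (4 * \<alpha>))) \<longlonglongrightarrow> exp (0 / (4 * \<alpha>))"
    using assms(1) by (intro tendsto_exp tendsto_divide tendsto_const tendsto_mult_scaling_exponent assms(2)) simp
  moreover have "(\<lambda>n. (sqrt (2*pi/\<alpha>) - 8 * \<beta> n * (real n - 1)) * sqrt (\<alpha> / (2*pi)))
      \<longlonglongrightarrow> (sqrt (2*pi/\<alpha>) - 0) * sqrt (\<alpha> / (2*pi))"
    by (rule tendsto_mult[OF tendsto_diff[OF tendsto_const tendsto_zero_mult_pred[OF assms(2)]] tendsto_const])
  ultimately have "(\<lambda>n. correction_factor \<alpha> (\<beta> n) n)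
      \<longlonglongrightarrow> exp (0 / (4 * \<alpha>)) / ((sqrt (2*pi/\<alpha>) - 0) * sqrt (\<alpha> / (2*pi)))"
    unfolding correction_factor_def using assms(1) by (intro tendsto_divide) auto
  then show ?thesis
    using assms(1) by (simp flip: real_sqrt_mult)
qed

theorem lemma2p5:
  fixes \<beta> \<delta> :: "nat \<Rightarrow> real" and \<alpha> :: real and b :: "nat \<Rightarrow> real"
  assumes beta_nonneg: "\<And>n. \<beta> n \<ge> 0"
    and beta_lim: "(\<lambda>n. real n * \<beta> n) \<longlonglongrightarrow> 0"
    and delta_pos: "\<And>n. \<delta> n > 0"
    and delta_lim: "(\<lambda>n. ln (\<delta> n) / ln (real n)) \<longlonglongrightarrow> 0"
    and alpha_pos: "\<alpha> > 0"
    and b_def: "\<And>n. b n = sqrt (2 * ln (real n))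
        - (ln (ln (real n)) + 2 * ln (\<delta> n) + ln (4 * pi)) / (2 * sqrt (2 * ln (real n)))"
  shows "\<exists>c :: nat \<Rightarrow> real. c \<longlonglongrightarrow> 1 \<and>
    (\<forall>\<^sub>F n in sequentially.
       Z (n - 1) (\<alpha> * (b n)^2 - \<beta> n / 4) (\<beta> n) / Z n \<alpha> (\<beta> n)
       \<le> c n * sqrt (\<alpha> / (2 * pi)) *
          b n powr (- \<beta> n * ((real n - 1) * (real n - 2) / 2) - real n + 1))"
proof -
  have "(\<lambda>n. 8 * \<beta> n * (real n - 1)) \<longlonglongrightarrow> 0"
    using beta_lim by (rule tendsto_zero_mult_pred)
  then have "\<forall>\<^sub>F n in sequentially. 8 * \<beta> n * (real n - 1) < sqrt (2*pi/\<alpha>)"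
    using alpha_pos by (intro order_tendstoD(2)) auto
  moreover have "\<forall>\<^sub>F n in sequentially. \<beta> n \<le> 2 * \<alpha>"
    using order_tendstoD(2)[OF real_mult_tendsto_zero_imp_tendsto_zero[OF beta_lim], of "2 * \<alpha>"] alpha_pos
    by (auto elim: eventually_mono)
  moreover have "\<forall>\<^sub>F n in sequentially. 1 \<le> b n"
    using filterlim_gumbel_centering_at_top[OF delta_lim] by (simp add: b_def filterlim_at_top)
  ultimately have "\<forall>\<^sub>F n in sequentially.
       Z (n - 1) (\<alpha> * (b n)^2 - \<beta> n / 4) (\<beta> n) / Z n \<alpha> (\<beta> n)
       \<le> correction_factor \<alpha> (\<beta> n) n * sqrt (\<alpha> / (2 * pi)) * b n powr (- scaling_exponent n (\<beta> n))"
    using eventually_ge_at_top[of 1]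
    by eventually_elim (intro Z_ratio_le alpha_pos beta_nonneg)
  moreover have "- scaling_exponent n (\<beta> n) = - \<beta> n * ((real n - 1) * (real n - 2) / 2) - real n + 1" for n
    by (simp add: scaling_exponent_def)
  ultimately show ?thesis
    using tendsto_correction_factor[OF alpha_pos beta_lim] by auto
qed

end
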